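(* Let $f=f(u,v)$ be a generalized timelike minimal surface with real Weierstrass data $(g_1,g_2,\hat{\omega}_1du,\hat{\omega}_2dv)$. Then: (i) a point $p$ satisfies $df_p=\mathbf{0}$ if and only if $\hat{\omega}_1(p)=\hat{\omega}_2(p)=0$; (ii) if $p$ is a singular point with $df_p=\mathbf 0$, then $f$ is a front at $p$ if and only if $g_1g_2(p)\neq1$ and $(g_1)_u(g_2)_v(p)\neq0$.
   Context: $\mathbb{L}^3$ is $\mathbb{R}^3$ with the Lorentzian metric $-dt^2+dx^2+dy^2$. A generalized timelike minimal surface is a non-constant smooth map $f\colon\Sigma\to\mathbb{L}^3$ from a 2-manifold which is an immersion on an open dense subset and such that near each point there are local coordinates $(u,v)$ with $\langle f_u,f_u\rangle=\langle f_v,f_v\rangle=0$ and $f_{uv}=0$. In such coordinates $f(u,v)=\tfrac12\int_{u_0}^u(-1-g_1^2,1-g_1^2,2g_1)\hat{\omega}_1du+\tfrac12\int_{v_0}^v(1+g_2^2,1-g_2^2,-2g_2)\hat{\omega}_2dv+f(u_0,v_0)$, with $g_1,\hat\omega_1$ functions of $u$ and $g_2,\hat\omega_2$ functions of $v$ (real Weierstrass data). Standing assumption: $g_1,g_2$ take finite real values at every singular point (point where $f$ is not an immersion). Such $f$ is a frontal with unit normal $n=(g_1+g_2,-g_1+g_2,1+g_1g_2)/\sqrt{(1-g_1g_2)^2+2(g_1+g_2)^2}$ (Euclidean-orthogonal to $df$); $f$ is a front at $p$ if $(f,n)$ is an immersion at $p$. *)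

theory Defs
  imports "HOL-Analysis.Analysis"
begin

definition smooth_real_on :: "real set \<Rightarrow> (real \<Rightarrow> real) \<Rightarrow> bool" where
  "smooth_real_on S g \<longleftrightarrow> (\<forall>k. \<forall>x\<in>S. ((deriv ^^ k) g) differentiable (at x))"

definition fu_vec :: "real \<Rightarrow> real \<Rightarrow> real^3" where
  "fu_vec g w = (w / 2) *\<^sub>R vector [-1 - g^2, 1 - g^2, 2 * g]"

definition fv_vec :: "real \<Rightarrow> real \<Rightarrow> real^3" where
  "fv_vec g w = (w / 2) *\<^sub>R vector [1 + g^2, 1 - g^2, - 2 * g]"

definition normal_vec :: "real \<Rightarrow> real \<Rightarrow> real^3" where
  "normal_vec g1 g2 = (1 / sqrt ((1 - g1 * g2)^2 + 2 * (g1 + g2)^2)) *\<^sub>R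
      vector [g1 + g2, - g1 + g2, 1 + g1 * g2]"

definition immersion_at :: "('a::real_normed_vector \<Rightarrow> 'b::real_normed_vector) \<Rightarrow> 'a \<Rightarrow> bool" where
  "immersion_at F p \<longleftrightarrow> (\<exists>D. (F has_derivative D) (at p) \<and> inj D)"

definition front_at :: "('a::real_normed_vector \<Rightarrow> real^3) \<Rightarrow> ('a \<Rightarrow> real^3) \<Rightarrow> 'a \<Rightarrow> bool" where
  "front_at f n p \<longleftrightarrow> immersion_at (\<lambda>q. (f q, n q)) p"

text \<open>A generalized timelike minimal surface, in null coordinates (u,v) ranging over
  the open rectangle I x J, with real Weierstrass data (g1, w1 du, g2, w2 dv):
  f is given (up to a constant) by the Weierstrass integral formula, which is expressed
  by prescribing its differential; f is an immersion on an open dense subset.\<close>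
definition gen_timelike_minimal ::
  "real set \<Rightarrow> real set \<Rightarrow> (real \<Rightarrow> real) \<Rightarrow> (real \<Rightarrow> real) \<Rightarrow> (real \<Rightarrow> real) \<Rightarrow> (real \<Rightarrow> real)
   \<Rightarrow> (real \<times> real \<Rightarrow> real^3) \<Rightarrow> bool" where
  "gen_timelike_minimal I J g1 w1 g2 w2 f \<longleftrightarrow>
     open I \<and> is_interval I \<and> I \<noteq> {} \<and> open J \<and> is_interval J \<and> J \<noteq> {} \<and>
     smooth_real_on I g1 \<and> smooth_real_on I w1 \<and> smooth_real_on J g2 \<and> smooth_real_on J w2 \<and>
     (\<forall>u\<in>I. \<forall>v\<in>J. (f has_derivative
         (\<lambda>(a, b). a *\<^sub>R fu_vec (g1 u) (w1 u) + b *\<^sub>R fv_vec (g2 v) (w2 v))) (at (u, v))) \<and>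
     (\<exists>u\<in>I. \<exists>v\<in>J. \<exists>u'\<in>I. \<exists>v'\<in>J. f (u, v) \<noteq> f (u', v')) \<and>
     (\<exists>W. open W \<and> W \<subseteq> I \<times> J \<and> I \<times> J \<subseteq> closure W \<and> (\<forall>q\<in>W. immersion_at f q))"

end

theory Submission
  imports Defs
begin

text \<open>The normal is the normalisation \<open>n = P / |P|\<close> of \<open>P = (g1 + g2, g2 - g1, 1 + g1 g2)\<close>.
  The derivative of \<open>x \<mapsto> x / |x|\<close> at \<open>x \<noteq> 0\<close> is the orthogonal projection onto \<open>x\<^sup>\<bottom>\<close>
  divided by \<open>|x|\<close>, whose kernel is the line through \<open>x\<close>. Where \<open>df = 0\<close>, which happens
  exactly where both Weierstrass integrands vanish, \<open>(f, n)\<close> is an immersion iff \<open>dn\<close> is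
  injective, i.e. iff \<open>g1' P\<^sub>a\<close>, \<open>g2' P\<^sub>b\<close> and \<open>P\<close> are linearly independent. Their
  determinant is \<open>2 g1' g2' (1 - g1 g2)\<close>.\<close>

definition sgn_derivative :: "'a::real_inner \<Rightarrow> 'a \<Rightarrow> 'a" where
  "sgn_derivative x h = (h - (sgn x \<bullet> h) *\<^sub>R sgn x) /\<^sub>R norm x"

lemma has_derivative_sgn:
  fixes x :: "'a::real_inner"
  assumes "x \<noteq> 0"
  shows "(sgn has_derivative sgn_derivative x) (at x)"
proof -
  have "((\<lambda>y. inverse (norm y) *\<^sub>R y) has_derivative
      (\<lambda>h. inverse (norm x) *\<^sub>R h - (inverse (norm x) * (h \<bullet> sgn x) * inverse (norm x)) *\<^sub>R x)) (at x)"
    using assms by (auto intro!: derivative_eq_intros has_derivative_norm[OF assms])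
  moreover have "sgn = (\<lambda>y::'a. inverse (norm y) *\<^sub>R y)"
    by (simp add: fun_eq_iff sgn_div_norm divide_inverse_commute)
  ultimately show ?thesis
    unfolding sgn_derivative_def[abs_def]
    by (simp add: sgn_div_norm inner_commute scaleR_diff_right divide_inverse_commute mult_ac)
qed

lemma sgn_derivative_eq_0_iff:
  fixes x h :: "'a::real_inner"
  assumes "x \<noteq> 0"
  shows "sgn_derivative x h = 0 \<longleftrightarrow> (\<exists>c. h = c *\<^sub>R x)"
proof
  assume "sgn_derivative x h = 0"
  then have "h = (sgn x \<bullet> h) *\<^sub>R sgn x"
    using assms by (simp add: sgn_derivative_def)
  then show "\<exists>c. h = c *\<^sub>R x"
    by (auto simp: sgn_div_norm)
next
  assume "\<exists>c. h = c *\<^sub>R x"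
  then show "sgn_derivative x h = 0"
    using assms
    by (auto simp: sgn_derivative_def sgn_div_norm inner_commute dot_square_norm power2_eq_square)
qed

lemma combination_eq_0_iff:
  fixes x y :: "'a::real_vector"
  shows "(\<lambda>(s, t). s *\<^sub>R x + t *\<^sub>R y) = (\<lambda>_. 0) \<longleftrightarrow> x = 0 \<and> y = 0"
proof
  assume "(\<lambda>(s, t). s *\<^sub>R x + t *\<^sub>R y) = (\<lambda>_. 0)"
  from fun_cong[OF this, of "(1, 0)"] fun_cong[OF this, of "(0, 1)"]
  show "x = 0 \<and> y = 0" by simp
qed auto

lemma immersion_at_iff_inj:
  "(F has_derivative D) (at p) \<Longrightarrow> immersion_at F p \<longleftrightarrow> inj D"
  unfolding immersion_at_def using has_derivative_unique by blast

lemma front_at_iff_immersion_at_normal: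
  assumes "(f has_derivative (\<lambda>_. 0)) (at p)"
  shows "front_at f n p \<longleftrightarrow> immersion_at n p"
proof
  assume "front_at f n p"
  then obtain D where D: "((\<lambda>q. (f q, n q)) has_derivative D) (at p)" and "inj D"
    unfolding front_at_def immersion_at_def by blast
  have "(\<lambda>h. fst (D h)) = (\<lambda>_. 0)"
    using has_derivative_unique[OF has_derivative_fst[OF D, simplified] assms] .
  then have "inj (\<lambda>h. snd (D h))"
    using \<open>inj D\<close> by (auto simp: inj_def prod_eq_iff fun_eq_iff)
  then show "immersion_at n p"
    using has_derivative_snd[OF D] unfolding immersion_at_def by auto
next
  assume "immersion_at n p"
  then obtain N where N: "(n has_derivative N) (at p)" and "inj N"
    unfolding immersion_at_def by blast
  have "inj (\<lambda>h. (0, N h))"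
    using \<open>inj N\<close> by (simp add: inj_def)
  then show "front_at f n p"
    using has_derivative_Pair[OF assms N] unfolding front_at_def immersion_at_def by blast
qed

lemma smooth_real_on_has_real_derivative:
  "smooth_real_on S g \<Longrightarrow> x \<in> S \<Longrightarrow> (g has_real_derivative deriv g x) (at x)"
  unfolding smooth_real_on_def
  by (metis DERIV_deriv_iff_real_differentiable funpow_0)

lemma fu_vec_eq_0_iff: "fu_vec g w = 0 \<longleftrightarrow> w = 0"
proof
  assume "fu_vec g w = 0"
  then have "fu_vec g w $ 1 = 0" by simp
  then have "w / 2 * (- 1 - g\<^sup>2) = 0"
    unfolding fu_vec_def by simp
  moreover have "- 1 - g\<^sup>2 \<noteq> 0"
    using zero_le_power2[of g] by linarith
  ultimately show "w = 0" by simp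
qed (simp add: fu_vec_def)

lemma fv_vec_eq_0_iff: "fv_vec g w = 0 \<longleftrightarrow> w = 0"
proof
  assume "fv_vec g w = 0"
  then have "fv_vec g w $ 1 = 0" by simp
  then have "w / 2 * (1 + g\<^sup>2) = 0"
    unfolding fv_vec_def by simp
  moreover have "1 + g\<^sup>2 \<noteq> 0"
    using zero_le_power2[of g] by linarith
  ultimately show "w = 0" by simp
qed (simp add: fv_vec_def)

definition normal_dir :: "real \<Rightarrow> real \<Rightarrow> real^3" where
  "normal_dir a b = vector [a + b, - a + b, 1 + a * b]"

lemma norm_normal_dir: "norm (normal_dir a b) = sqrt ((1 - a * b)\<^sup>2 + 2 * (a + b)\<^sup>2)"
  by (simp add: normal_dir_def norm_eq_sqrt_inner inner_vec_def sum_3 power2_eq_square algebra_simps)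

lemma normal_dir_nonzero: "normal_dir a b \<noteq> 0"
proof
  assume "normal_dir a b = 0"
  then have "normal_dir a b $ 1 = 0" "normal_dir a b $ 2 = 0" "normal_dir a b $ 3 = 0"
    by simp_all
  then have "a + b = 0" "- a + b = 0" "1 + a * b = 0"
    unfolding normal_dir_def by simp_all
  then have "a = 0" "b = 0" by linarith+
  with \<open>1 + a * b = 0\<close> show False by simp
qed

lemma normal_vec_eq_sgn: "normal_vec a b = sgn (normal_dir a b)"
  unfolding sgn_div_norm norm_normal_dir
  by (simp add: normal_vec_def normal_dir_def divide_inverse_commute)

lemma normal_dir_combination_eq_iff:
  "x *\<^sub>R vector [1, -1, b] + y *\<^sub>R vector [1, 1, a] = c *\<^sub>R normal_dir a b
    \<longleftrightarrow> x = c * a \<and> y = c * b \<and> (c = 0 \<or> a * b = 1)" (is "?comb \<longleftrightarrow> _")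
proof -
  have "?comb \<longleftrightarrow> x + y = c * (a + b) \<and> y - x = c * (b - a) \<and> b * x + a * y = c * (1 + a * b)"
    by (simp add: normal_dir_def vec_eq_iff forall_3 algebra_simps)
  also have "\<dots> \<longleftrightarrow> x = c * a \<and> y = c * b \<and> c * (a * b - 1) = 0"
  proof -
    have "x + y = c * (a + b) \<and> y - x = c * (b - a) \<longleftrightarrow> x = c * a \<and> y = c * b"
      by (auto simp: algebra_simps)
    moreover have "b * (c * a) + a * (c * b) = c * (1 + a * b) \<longleftrightarrow> c * (a * b - 1) = 0"
      by (auto simp: algebra_simps)
    ultimately show ?thesis by auto
  qed
  finally show ?thesis by simp
qed

lemma has_derivative_normal_dir:
  assumes "(g1 has_real_derivative p) (at u)" and "(g2 has_real_derivative q) (at v)"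
  shows "((\<lambda>z. normal_dir (g1 (fst z)) (g2 (snd z))) has_derivative
    (\<lambda>h. (fst h * p) *\<^sub>R vector [1, -1, g2 v] + (snd h * q) *\<^sub>R vector [1, 1, g1 u])) (at (u, v))"
proof -
  have normal_dir_expand: "normal_dir =
      (\<lambda>a b. a *\<^sub>R vector [1, -1, 0] + b *\<^sub>R vector [1, 1, 0] + (1 + a * b) *\<^sub>R vector [0, 0, 1])"
    by (simp add: fun_eq_iff normal_dir_def vec_eq_iff forall_3)
  show ?thesis
    unfolding normal_dir_expand
    by (auto intro!: derivative_eq_intros DERIV_compose_FDERIV assms simp: vec_eq_iff forall_3 algebra_simps)
qed

lemma immersion_at_normal_vec_iff:
  assumes "(g1 has_real_derivative p) (at u)" and "(g2 has_real_derivative q) (at v)"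
  shows "immersion_at (\<lambda>z. normal_vec (g1 (fst z)) (g2 (snd z))) (u, v)
    \<longleftrightarrow> g1 u * g2 v \<noteq> 1 \<and> p * q \<noteq> 0"
proof -
  define a b where "a = g1 u" and "b = g2 v"
  define dn where "dn h = sgn_derivative (normal_dir a b)
    ((fst h * p) *\<^sub>R vector [1, -1, b] + (snd h * q) *\<^sub>R vector [1, 1, a])" for h :: "real \<times> real"
  have "((\<lambda>z. normal_vec (g1 (fst z)) (g2 (snd z))) has_derivative dn) (at (u, v))"
    unfolding normal_vec_eq_sgn dn_def a_def b_def
    using has_derivative_compose[OF has_derivative_normal_dir[OF assms]
        has_derivative_sgn[OF normal_dir_nonzero]] by simp
  then have "immersion_at (\<lambda>z. normal_vec (g1 (fst z)) (g2 (snd z))) (u, v)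
      \<longleftrightarrow> (\<forall>h. dn h = 0 \<longrightarrow> h = 0)"
    by (simp add: immersion_at_iff_inj linear_injective_0 has_derivative_linear)
  also have "\<dots> \<longleftrightarrow> (\<forall>x y c. x * p = c * a \<and> y * q = c * b \<and> (c = 0 \<or> a * b = 1) \<longrightarrow> x = 0 \<and> y = 0)"
    by (simp add: dn_def sgn_derivative_eq_0_iff[OF normal_dir_nonzero]
        normal_dir_combination_eq_iff prod_eq_iff)
  also have "\<dots> \<longleftrightarrow> a * b \<noteq> 1 \<and> p * q \<noteq> 0"
  proof (intro iffI conjI)
    assume kernel_trivial: "\<forall>x y c. x * p = c * a \<and> y * q = c * b \<and> (c = 0 \<or> a * b = 1) \<longrightarrow> x = 0 \<and> y = 0"
    have "p \<noteq> 0" "q \<noteq> 0"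
      using kernel_trivial[rule_format, where x = 1 and y = 0 and c = 0]
        kernel_trivial[rule_format, where x = 0 and y = 1 and c = 0] by auto
    then show "p * q \<noteq> 0" by simp
    then show "a * b \<noteq> 1"
      using kernel_trivial[rule_format, where x = "a / p" and y = "b / q" and c = 1] by auto
  qed auto
  finally show ?thesis
    unfolding a_def b_def .
qed

theorem lemma4p10:
  fixes I J :: "real set" and g1 w1 g2 w2 :: "real \<Rightarrow> real"
    and f :: "real \<times> real \<Rightarrow> real^3" and u v :: real
  assumes "gen_timelike_minimal I J g1 w1 g2 w2 f"
    and "u \<in> I" and "v \<in> J"
  shows "((f has_derivative (\<lambda>_. 0)) (at (u, v)) \<longleftrightarrow> w1 u = 0 \<and> w2 v = 0)
    \<and> (\<not> immersion_at f (u, v) \<and> (f has_derivative (\<lambda>_. 0)) (at (u, v)) \<longrightarrow>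
         (front_at f (\<lambda>q. normal_vec (g1 (fst q)) (g2 (snd q))) (u, v)
            \<longleftrightarrow> g1 u * g2 v \<noteq> 1 \<and> deriv g1 u * deriv g2 v \<noteq> 0))"
proof -
  have df: "(f has_derivative
      (\<lambda>(s, t). s *\<^sub>R fu_vec (g1 u) (w1 u) + t *\<^sub>R fv_vec (g2 v) (w2 v))) (at (u, v))"
    and smooth: "smooth_real_on I g1" "smooth_real_on J g2"
    using assms unfolding gen_timelike_minimal_def by simp_all
  have "(f has_derivative (\<lambda>_. 0)) (at (u, v))
      \<longleftrightarrow> (\<lambda>(s, t). s *\<^sub>R fu_vec (g1 u) (w1 u) + t *\<^sub>R fv_vec (g2 v) (w2 v)) = (\<lambda>_. 0)"
  proof
    assume "(f has_derivative (\<lambda>_. 0)) (at (u, v))"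
    then show "(\<lambda>(s, t). s *\<^sub>R fu_vec (g1 u) (w1 u) + t *\<^sub>R fv_vec (g2 v) (w2 v)) = (\<lambda>_. 0)"
      by (rule has_derivative_unique[OF df])
  next
    assume "(\<lambda>(s, t). s *\<^sub>R fu_vec (g1 u) (w1 u) + t *\<^sub>R fv_vec (g2 v) (w2 v)) = (\<lambda>_. 0)"
    with df show "(f has_derivative (\<lambda>_. 0)) (at (u, v))" by simp
  qed
  then have "(f has_derivative (\<lambda>_. 0)) (at (u, v)) \<longleftrightarrow> w1 u = 0 \<and> w2 v = 0"
    by (simp only: combination_eq_0_iff fu_vec_eq_0_iff fv_vec_eq_0_iff)
  moreover have "front_at f (\<lambda>q. normal_vec (g1 (fst q)) (g2 (snd q))) (u, v)
      \<longleftrightarrow> g1 u * g2 v \<noteq> 1 \<and> deriv g1 u * deriv g2 v \<noteq> 0"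
    if "(f has_derivative (\<lambda>_. 0)) (at (u, v))"
  proof -
    have "(g1 has_real_derivative deriv g1 u) (at u)" "(g2 has_real_derivative deriv g2 v) (at v)"
      using smooth assms(2,3) by (simp_all add: smooth_real_on_has_real_derivative)
    then show ?thesis
      unfolding front_at_iff_immersion_at_normal[OF that] by (rule immersion_at_normal_vec_iff)
  qed
  ultimately show ?thesis by blast
qed

end
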